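(* For every integer $k\ge1$, $$\frac{B_k}{k!}=n_{(1,\dots,1)},$$ where $(1,\dots,1)$ is the tuple consisting of $k$ entries equal to $1$.
   Context: $B_k$ are the Bernoulli numbers, defined by $\frac{t}{e^t-1}=\sum_{k\ge0}B_k\frac{t^k}{k!}$ (so $B_1=-\tfrac12$). For a tuple $J=(j_1,\dots,j_s)$ of integers $j_i\ge1$, $m_J:=\prod_{i=1}^{s}\frac{1}{j_i+j_{i+1}+\cdots+j_s+1}\cdot\frac{1}{(j_i-1)!}$, and $n_J:=\sum_{J=J_1\|\cdots\|J_l}(-1)^l m_{J_1}\cdots m_{J_l}$, where the sum runs over all ways of writing $J$ as a concatenation $J_1\|\cdots\|J_l$ of $l\ge1$ nonempty tuples. *)

theory Defs
  imports Complex_Main "HOL-Computational_Algebra.Formal_Power_Series"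
begin

text \<open>Bernoulli numbers via the exponential generating function
  t/(e^t - 1) = sum_k B_k t^k / k!  (so B_1 = -1/2), as a formal power series.\<close>
definition bernoulli_egf :: "real fps" where
  "bernoulli_egf = fps_X / (fps_exp 1 - 1)"

definition bernoulli :: "nat \<Rightarrow> real" where
  "bernoulli k = fact k * fps_nth bernoulli_egf k"

definition mJ :: "nat list \<Rightarrow> real" where
  "mJ J = (\<Prod>i<length J. (1 / (real (sum_list (drop i J)) + 1)) * (1 / fact (J ! i - 1)))"

definition decomps :: "'a list \<Rightarrow> 'a list list set" where
  "decomps J = {Js. concat Js = J \<and> Js \<noteq> [] \<and> (\<forall>X\<in>set Js. X \<noteq> [])}"

definition nJ :: "nat list \<Rightarrow> real" where
  "nJ J = (\<Sum>Js\<in>decomps J. (-1) ^ length Js * prod_list (map mJ Js))"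

end

theory Submission
  imports Defs
begin

text \<open>Splitting off the first block of a decomposition of \<open>(1,\<dots>,1)\<close> turns the definition of
  \<open>n_J\<close> into the recursion \<open>n_k = -\<Sum>\<^sub>s<k. n_s / (k-s+1)!\<close>, since \<open>m\<close> of a block of \<open>s\<close> ones
  is \<open>1/(s+1)!\<close>. Comparing coefficients in \<open>B(t) (e^t - 1) = t\<close> shows that \<open>B_k/k!\<close> satisfies
  the same recursion with the same initial value \<open>1\<close>.\<close>

text \<open>Unlike \<open>decomps\<close>, this admits the empty decomposition of \<open>[]\<close>, so the recursion below
  bottoms out at value \<open>1\<close>.\<close>

definition splittings :: "'a list \<Rightarrow> 'a list list set" where
  "splittings J = {Js. concat Js = J \<and> (\<forall>X\<in>set Js. X \<noteq> [])}"

lemma splittings_Nil [simp]: "splittings [] = {[]}"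
  unfolding splittings_def by auto

lemma splittings_eq_UN:
  assumes "J \<noteq> []"
  shows "splittings J = (\<Union>s\<in>{1..length J}. Cons (take s J) ` splittings (drop s J))"
proof
  show "splittings J \<subseteq> (\<Union>s\<in>{1..length J}. Cons (take s J) ` splittings (drop s J))"
  proof
    fix Js assume "Js \<in> splittings J"
    hence Js: "concat Js = J" "\<forall>X\<in>set Js. X \<noteq> []" by (auto simp: splittings_def)
    then obtain X Js' where Js_eq: "Js = X # Js'" using assms by (cases Js) auto
    with Js have "X \<noteq> []" "J = X @ concat Js'" by auto
    hence "length X \<in> {1..length J}" "take (length X) J = X" "drop (length X) J = concat Js'"
      by (auto simp: Suc_le_eq)
    moreover have "Js' \<in> splittings (concat Js')" using Js Js_eq by (auto simp: splittings_def)
    ultimately show "Js \<in> (\<Union>s\<in>{1..length J}. Cons (take s J) ` splittings (drop s J))"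
      using Js_eq by force
  qed
qed (auto simp: splittings_def)

lemma finite_splittings: "finite (splittings J)"
proof (induction "length J" arbitrary: J rule: less_induct)
  case less
  then show ?case
    by (cases "J = []") (simp_all add: splittings_eq_UN)
qed

lemma decomps_eq_splittings: "J \<noteq> [] \<Longrightarrow> decomps J = splittings J"
  unfolding decomps_def splittings_def by auto

definition alternating_splitting_sum :: "('a list \<Rightarrow> 'b::comm_ring_1) \<Rightarrow> 'a list \<Rightarrow> 'b" where
  "alternating_splitting_sum w J = (\<Sum>Js\<in>splittings J. (-1) ^ length Js * prod_list (map w Js))"

lemma alternating_splitting_sum_Nil [simp]: "alternating_splitting_sum w [] = 1"
  by (simp add: alternating_splitting_sum_def)

lemma alternating_splitting_sum_rec:
  assumes "J \<noteq> []"
  shows "alternating_splitting_sum w J =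
    (\<Sum>s\<in>{1..length J}. - w (take s J) * alternating_splitting_sum w (drop s J))"
proof -
  let ?term = "\<lambda>Js. (-1) ^ length Js * prod_list (map w Js)"
  have disjoint: "Cons (take s J) ` splittings (drop s J) \<inter> Cons (take t J) ` splittings (drop t J) = {}"
    if "s \<in> {1..length J}" "t \<in> {1..length J}" "s \<noteq> t" for s t
  proof -
    from that have "take s J \<noteq> take t J" by (metis atLeastAtMost_iff length_take min.absorb2)
    then show ?thesis by auto
  qed
  have "alternating_splitting_sum w J =
      (\<Sum>s\<in>{1..length J}. \<Sum>Js\<in>Cons (take s J) ` splittings (drop s J). ?term Js)"
    unfolding alternating_splitting_sum_def splittings_eq_UN[OF assms]
    by (rule sum.UNION_disjoint) (auto simp: finite_splittings disjoint)
  also have "\<dots> = (\<Sum>s\<in>{1..length J}. - w (take s J) * alternating_splitting_sum w (drop s J))"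
    by (intro sum.cong refl, subst sum.reindex)
       (auto simp: alternating_splitting_sum_def sum_distrib_left mult_ac intro!: sum.cong)
  finally show ?thesis .
qed

lemma nJ_eq_alternating_splitting_sum: "J \<noteq> [] \<Longrightarrow> nJ J = alternating_splitting_sum mJ J"
  by (simp add: nJ_def alternating_splitting_sum_def decomps_eq_splittings)

lemma mJ_replicate_one: "mJ (replicate s 1) = 1 / fact (Suc s)"
proof -
  have "mJ (replicate s 1) = 1 / (\<Prod>i<s. real (s - i) + 1)"
    unfolding mJ_def by (simp add: sum_list_replicate prod_dividef)
  also have "(\<Prod>i<s. real (s - i) + 1) = (\<Prod>j\<in>{1..s}. real j + 1)"
    by (rule prod.reindex_bij_witness[of _ "\<lambda>j. s - j" "\<lambda>i. s - i"]) auto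
  also have "\<dots> = fact (Suc s)"
    by (induction s) (auto simp: prod.nat_ivl_Suc' algebra_simps)
  finally show ?thesis .
qed

lemma alternating_splitting_sum_replicate_one_rec:
  assumes "k \<ge> 1"
  shows "alternating_splitting_sum mJ (replicate k 1) =
    - (\<Sum>i<k. alternating_splitting_sum mJ (replicate i 1) / fact (k - i + 1))"
proof -
  have "alternating_splitting_sum mJ (replicate k 1) =
      (\<Sum>s\<in>{1..k}. - alternating_splitting_sum mJ (replicate (k - s) 1) / fact (Suc s))"
    using assms by (subst alternating_splitting_sum_rec) (auto simp: mJ_replicate_one[simplified])
  also have "\<dots> = (\<Sum>i<k. - alternating_splitting_sum mJ (replicate i 1) / fact (Suc (k - i)))"
    by (rule sum.reindex_bij_witness[of _ "\<lambda>i. k - i" "\<lambda>s. k - s"]) auto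
  finally show ?thesis by (simp add: sum_negf)
qed

lemma bernoulli_egf_times_exp_minus_one: "bernoulli_egf * (fps_exp 1 - 1) = fps_X"
proof -
  have "fps_nth (fps_exp (1::real) - 1) 1 \<noteq> 0" by simp
  hence "fps_exp (1::real) - 1 \<noteq> 0" "subdegree (fps_exp (1::real) - 1) \<le> subdegree (fps_X :: real fps)"
    by (auto intro: subdegree_leI)
  thus ?thesis unfolding bernoulli_egf_def by (rule fps_times_divide_eq)
qed

lemma bernoulli_egf_convolution:
  "(\<Sum>i\<le>n. fps_nth bernoulli_egf i / fact (n + 1 - i)) = (if n = 0 then 1 else 0)"
proof -
  have "(if n = 0 then 1 else 0) = fps_nth (bernoulli_egf * (fps_exp 1 - 1)) (n + 1)"
    by (simp add: bernoulli_egf_times_exp_minus_one fps_X_def)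
  also have "\<dots> = (\<Sum>i\<le>n+1. fps_nth bernoulli_egf i * fps_nth (fps_exp 1 - 1) (n + 1 - i))"
    by (simp add: fps_mult_nth atLeast0AtMost)
  also have "\<dots> = (\<Sum>i\<le>n. fps_nth bernoulli_egf i / fact (n + 1 - i))"
    by (simp add: Suc_diff_le divide_inverse)
  finally show ?thesis ..
qed

lemma bernoulli_egf_nth_0: "fps_nth bernoulli_egf 0 = 1"
  using bernoulli_egf_convolution[of 0] by simp

lemma bernoulli_egf_nth_rec:
  assumes "n \<ge> 1"
  shows "fps_nth bernoulli_egf n = - (\<Sum>i<n. fps_nth bernoulli_egf i / fact (n - i + 1))"
proof -
  have "(\<Sum>i\<le>n. fps_nth bernoulli_egf i / fact (n + 1 - i)) = 0"
    using bernoulli_egf_convolution[of n] assms by simp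
  moreover have "\<And>i. i < n \<Longrightarrow> n + 1 - i = n - i + 1" by simp
  ultimately show ?thesis
    by (simp add: lessThan_Suc_atMost[symmetric] eq_neg_iff_add_eq_0 del: fact_Suc)
qed

lemma alternating_splitting_sum_replicate_one_eq_bernoulli_egf:
  "alternating_splitting_sum mJ (replicate n 1) = fps_nth bernoulli_egf n"
proof (induction n rule: less_induct)
  case (less n)
  show ?case
  proof (cases "n = 0")
    case True
    then show ?thesis by (simp add: bernoulli_egf_nth_0)
  next
    case False
    then have "alternating_splitting_sum mJ (replicate n 1) =
        - (\<Sum>i<n. alternating_splitting_sum mJ (replicate i 1) / fact (n - i + 1))"
      by (intro alternating_splitting_sum_replicate_one_rec) simp
    also have "\<dots> = - (\<Sum>i<n. fps_nth bernoulli_egf i / fact (n - i + 1))"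
      using less by simp
    also have "\<dots> = fps_nth bernoulli_egf n"
      using False by (simp add: bernoulli_egf_nth_rec)
    finally show ?thesis .
  qed
qed

theorem mainTheorem8:
  fixes k :: nat
  assumes "k \<ge> 1"
  shows "bernoulli k / fact k = nJ (replicate k 1)"
proof -
  have "nJ (replicate k 1) = alternating_splitting_sum mJ (replicate k 1)"
    using assms by (simp add: nJ_eq_alternating_splitting_sum)
  also have "\<dots> = fps_nth bernoulli_egf k"
    by (rule alternating_splitting_sum_replicate_one_eq_bernoulli_egf)
  finally show ?thesis by (simp add: bernoulli_def)
qed

end
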